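(* Let $G=(V,E)$ be a planar graph embedded in the plane, with $n$ vertices, that has a perfect matching, has no vertex of degree $1$, and in which no two vertices of degree $2$ are adjacent. Then $G$ has at least $\frac{n}{4}+2$ faces.
   Context: Faces of an embedded planar graph are the closures of the maximal open connected subsets of the plane minus the embedding. *)

theory Defs
  imports "HOL-Analysis.Analysis"
begin

definition simple_graph :: "'a set \<Rightarrow> 'a set set \<Rightarrow> bool" where
  "simple_graph V E \<longleftrightarrow> finite V \<and>
     (\<forall>e\<in>E. \<exists>u v. u \<noteq> v \<and> e = {u, v} \<and> u \<in> V \<and> v \<in> V)"

definition degree :: "'a set set \<Rightarrow> 'a \<Rightarrow> nat" where
  "degree E v = card {e\<in>E. v \<in> e}"

definition adjacent :: "'a set set \<Rightarrow> 'a \<Rightarrow> 'a \<Rightarrow> bool" where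
  "adjacent E u v \<longleftrightarrow> {u, v} \<in> E"

definition perfect_matching :: "'a set \<Rightarrow> 'a set set \<Rightarrow> 'a set set \<Rightarrow> bool" where
  "perfect_matching V E M \<longleftrightarrow> M \<subseteq> E \<and> (\<forall>v\<in>V. \<exists>!e. e \<in> M \<and> v \<in> e)"

definition plane_embedding ::
  "'a set \<Rightarrow> 'a set set \<Rightarrow> ('a \<Rightarrow> complex) \<Rightarrow> ('a set \<Rightarrow> real \<Rightarrow> complex) \<Rightarrow> bool" where
  "plane_embedding V E pos \<gamma> \<longleftrightarrow>
     inj_on pos V \<and>
     (\<forall>e\<in>E. arc (\<gamma> e) \<and> {pathstart (\<gamma> e), pathfinish (\<gamma> e)} = pos ` e \<and>
             path_image (\<gamma> e) \<inter> pos ` V = pos ` e) \<and>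
     (\<forall>e\<in>E. \<forall>e'\<in>E. e \<noteq> e' \<longrightarrow>
             path_image (\<gamma> e) \<inter> path_image (\<gamma> e') \<subseteq> pos ` (e \<inter> e'))"

definition embedding_set ::
  "'a set \<Rightarrow> 'a set set \<Rightarrow> ('a \<Rightarrow> complex) \<Rightarrow> ('a set \<Rightarrow> real \<Rightarrow> complex) \<Rightarrow> complex set" where
  "embedding_set V E pos \<gamma> = pos ` V \<union> (\<Union>e\<in>E. path_image (\<gamma> e))"

definition faces ::
  "'a set \<Rightarrow> 'a set set \<Rightarrow> ('a \<Rightarrow> complex) \<Rightarrow> ('a set \<Rightarrow> real \<Rightarrow> complex) \<Rightarrow> complex set set" where
  "faces V E pos \<gamma> = closure ` components (- embedding_set V E pos \<gamma>)"

end

(* Adding the edges of the drawing one at a time gives an Euler-type inequality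
   faces + |V| >= |E| + 1 + (number of connected components) >= |E| + 2.
   An arc whose ends already lie in one path component of the drawing closes a Jordan
   curve through that component and splits a face; an arc joining two components merges
   them without splitting anything (Janiszewski's theorem); and since arcs have empty
   interior no face ever disappears.
   Every vertex is matched and has degree other than 1, so its degree is at least 2; the
   matching sends the vertices of degree 2 injectively to vertices of degree at least 3,
   because no two vertices of degree 2 are adjacent. Hence 2|E| >= 2s + 3(n - s) with
   s <= n - s, that is 4|E| >= 5n, and the number of faces is at least
   |E| - n + 2 >= n/4 + 2. *)

theory Submission
  imports Defs
begin

lemma interior_arc_image_empty:
  fixes g :: "real \<Rightarrow> 'a::euclidean_space"
  assumes "arc g" and "2 \<le> DIM('a)"
  shows "interior (path_image g) = {}"
proof (rule ccontr)
  assume nonempty: "interior (path_image g) \<noteq> {}"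
  obtain h k where hk: "homeomorphism (path_image g) {0..1::real} h k"
    using homeomorphic_arc_image_interval[OF \<open>arc g\<close>, of 0 1] by (auto simp: homeomorphic_def)
  have "continuous_on (interior (path_image g)) h"
    using hk interior_subset by (meson continuous_on_subset homeomorphism_cont1)
  moreover have "inj_on h (interior (path_image g))"
    using homeomorphism_apply1[OF hk] interior_subset by (metis inj_onI subsetD)
  ultimately have "DIM('a) \<le> DIM(real)"
    using nonempty by (intro invariance_of_dimension) auto
  with assms(2) show False by simp
qed

lemma ex_image_factorisation:
  assumes "\<And>u w. u \<in> S \<Longrightarrow> w \<in> S \<Longrightarrow> f u = f w \<Longrightarrow> h u = h w"
  shows "\<exists>g. \<forall>u\<in>S. h u = g (f u)"
proof -
  have "\<forall>u w. u \<in> S \<and> w \<in> S \<and> f u = f w \<longrightarrow> h u = h w" using assms by blast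
  then show ?thesis unfolding function_factors_left_gen by blast
qed

lemma finite_image_if_factors:
  assumes "finite (f ` S)" and "\<And>u w. u \<in> S \<Longrightarrow> w \<in> S \<Longrightarrow> f u = f w \<Longrightarrow> h u = h w"
  shows "finite (h ` S)"
proof -
  obtain g where "\<forall>u\<in>S. h u = g (f u)" using ex_image_factorisation[of S f h] assms(2) by blast
  then have "h ` S = g ` f ` S" by (simp add: image_comp)
  with assms(1) show ?thesis by simp
qed

lemma card_image_le_if_factors:
  assumes "finite (f ` S)" and "\<And>u w. u \<in> S \<Longrightarrow> w \<in> S \<Longrightarrow> f u = f w \<Longrightarrow> h u = h w"
  shows "card (h ` S) \<le> card (f ` S)"
proof -
  obtain g where "\<forall>u\<in>S. h u = g (f u)" using ex_image_factorisation[of S f h] assms(2) by blast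
  then have "h ` S = g ` f ` S" by (simp add: image_comp)
  with assms(1) show ?thesis by (simp add: card_image_le)
qed

lemma card_image_less_if_factors:
  assumes "finite (f ` S)" and "\<And>u w. u \<in> S \<Longrightarrow> w \<in> S \<Longrightarrow> f u = f w \<Longrightarrow> h u = h w"
    and "u \<in> S" "w \<in> S" "f u \<noteq> f w" "h u = h w"
  shows "card (h ` S) < card (f ` S)"
proof -
  obtain g where g: "\<forall>u\<in>S. h u = g (f u)" using ex_image_factorisation[of S f h] assms(2) by blast
  then have hS: "h ` S = g ` f ` S" by (simp add: image_comp)
  have "g (f u) = g (f w)"
    using assms(3-6) g by metis
  then have "\<not> inj_on g (f ` S)"
    using assms(3-5) by (auto dest: inj_onD)
  then have "card (g ` f ` S) \<noteq> card (f ` S)"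
    using assms(1) inj_on_iff_eq_card by blast
  with hS assms(1) show ?thesis by (metis card_image_le le_neq_implies_less)
qed

lemma components_eq_image_if_interior_empty:
  fixes K A :: "'a::real_normed_vector set"
  assumes "closed K" and "interior A = {}"
  shows "components (- K) = connected_component_set (- K) ` (- (K \<union> A))"
proof
  show "connected_component_set (- K) ` (- (K \<union> A)) \<subseteq> components (- K)"
    by (auto intro: componentsI)
  show "components (- K) \<subseteq> connected_component_set (- K) ` (- (K \<union> A))"
  proof
    fix C assume C: "C \<in> components (- K)"
    have "open C" using open_components[OF _ C] \<open>closed K\<close> by auto
    then have "\<not> C \<subseteq> A"
      using in_components_nonempty[OF C] interior_maximal[of C A] assms(2) by auto
    then obtain z where "z \<in> C" "z \<notin> A" by auto
    moreover have "C = connected_component_set (- K) z"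
      using C \<open>z \<in> C\<close> by (metis componentsE connected_component_eq)
    ultimately show "C \<in> connected_component_set (- K) ` (- (K \<union> A))"
      using in_components_subset[OF C] by auto
  qed
qed

lemma connected_component_set_eq_mono:
  assumes "T \<subseteq> S" and "y \<in> T"
    and "connected_component_set T x = connected_component_set T y"
  shows "connected_component_set S x = connected_component_set S y"
proof -
  have "y \<in> connected_component_set T x" using assms(2,3) by simp
  then have "connected_component S x y"
    using assms(1) by (simp add: connected_component_of_subset)
  then show ?thesis by (simp add: connected_component_eq)
qed

(* A new component is determined by the old one containing it and the value of Q,
   and no old component is swallowed because A has empty interior. *)
lemma components_Un_interior_empty:
  fixes K A :: "'a::real_normed_vector set" and Q :: "'a \<Rightarrow> bool"
  assumes "closed K" and "interior A = {}" and "finite (components (- K))"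
    and reconnect: "\<And>x y. x \<notin> K \<union> A \<Longrightarrow> y \<notin> K \<union> A \<Longrightarrow> connected_component (- K) x y
      \<Longrightarrow> Q x = Q y \<Longrightarrow> connected_component (- (K \<union> A)) x y"
  shows "finite (components (- (K \<union> A)))"
    and "card (components (- K)) \<le> card (components (- (K \<union> A)))"
proof -
  let ?U = "- (K \<union> A)"
  have KU: "components (- K) = connected_component_set (- K) ` ?U"
    by (rule components_eq_image_if_interior_empty[OF assms(1,2)])
  have "finite ((\<lambda>x. (connected_component_set (- K) x, Q x)) ` ?U)"
  proof (rule finite_subset)
    show "finite (components (- K) \<times> (UNIV :: bool set))" using assms(3) by simp
  qed (auto simp: KU)
  then show fin: "finite (components ?U)"
    unfolding components_def
  proof (rule finite_image_if_factors)
    fix x y assume x: "x \<in> ?U" and y: "y \<in> ?U"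
      and eq: "(connected_component_set (- K) x, Q x) = (connected_component_set (- K) y, Q y)"
    then have "connected_component (- K) x y"
      using x by (simp add: connected_component_eq_eq)
    then have "connected_component ?U x y"
      using reconnect x y eq by blast
    then show "connected_component_set ?U x = connected_component_set ?U y"
      by (simp add: connected_component_eq)
  qed
  show "card (components (- K)) \<le> card (components ?U)"
    unfolding KU using fin unfolding components_def
    by (rule card_image_le_if_factors) (rule connected_component_set_eq_mono[of ?U], auto)
qed

lemma card_components_less_Un:
  fixes K A :: "'a::real_normed_vector set"
  assumes "closed K" and "interior A = {}" and "finite (components (- (K \<union> A)))"
    and "x \<notin> K \<union> A" "y \<notin> K \<union> A"
    and "connected_component (- K) x y" "\<not> connected_component (- (K \<union> A)) x y"
  shows "card (components (- K)) < card (components (- (K \<union> A)))"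
proof -
  let ?U = "- (K \<union> A)"
  have "card (connected_component_set (- K) ` ?U) < card (connected_component_set ?U ` ?U)"
  proof (rule card_image_less_if_factors[where u = x and w = y])
    show "finite (connected_component_set ?U ` ?U)"
      using assms(3) by (simp add: components_def)
    show "connected_component_set (- K) u = connected_component_set (- K) w"
      if "u \<in> ?U" "w \<in> ?U" "connected_component_set ?U u = connected_component_set ?U w" for u w
      using connected_component_set_eq_mono[of ?U "- K" w u] that by auto
    show "x \<in> ?U" "y \<in> ?U" using assms(4,5) by auto
    show "connected_component_set ?U x \<noteq> connected_component_set ?U y"
    proof
      assume "connected_component_set ?U x = connected_component_set ?U y"
      then have "y \<in> connected_component_set ?U x" using assms(5) by simp
      with assms(7) show False by simp
    qed
    show "connected_component_set (- K) x = connected_component_set (- K) y"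
      using assms(6) by (simp add: connected_component_eq)
  qed
  then show ?thesis
    unfolding components_eq_image_if_interior_empty[OF assms(1,2)] by (simp add: components_def)
qed

lemma connected_component_Un_bridge_arc:
  fixes K1 K2 :: "complex set" and g :: "real \<Rightarrow> complex"
  assumes "compact K1" and "closed K2" and "K1 \<inter> K2 = {}" and "arc g"
    and "path_image g \<inter> (K1 \<union> K2) \<subseteq> {pathstart g, pathfinish g}"
    and "pathfinish g \<notin> K1" and "pathstart g \<notin> K2"
    and "x \<notin> K1 \<union> K2 \<union> path_image g" and "y \<notin> K1 \<union> K2 \<union> path_image g"
    and "connected_component (- (K1 \<union> K2)) x y"
  shows "connected_component (- (K1 \<union> K2 \<union> path_image g)) x y"
proof -
  let ?A = "path_image g"
  have "compact ?A" using \<open>arc g\<close> arc_imp_path compact_path_image by blast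
  have "connected (- ?A)" using \<open>arc g\<close> by (intro connected_arc_complement) auto
  then have "connected_component (- ?A) x y"
    using assms(8,9) by (simp add: connected_iff_connected_component)
  moreover have "connected_component (- K1) x y"
    using assms(10) by (rule connected_component_of_subset) auto
  moreover have "?A \<inter> K1 \<subseteq> {pathstart g}" using assms(5,6) by auto
  then have "connected (?A \<inter> K1)" by (metis connected_empty connected_sing subset_singletonD)
  ultimately have "connected_component (- (?A \<union> K1)) x y"
    using Janiszewski[OF \<open>compact ?A\<close> compact_imp_closed[OF assms(1)]] by blast
  moreover have "connected_component (- K2) x y"
    using assms(10) by (rule connected_component_of_subset) auto
  moreover have "(?A \<union> K1) \<inter> K2 \<subseteq> {pathfinish g}" using assms(3,5,7) by auto
  then have "connected ((?A \<union> K1) \<inter> K2)" by (metis connected_empty connected_sing subset_singletonD)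
  ultimately have "connected_component (- (?A \<union> K1 \<union> K2)) x y"
    using Janiszewski[OF compact_Un[OF \<open>compact ?A\<close> assms(1)] assms(2)] by blast
  then show ?thesis by (simp add: Un_ac)
qed

lemma simple_loop_join_arcs:
  assumes "arc g" and "arc q" and "pathstart q = pathstart g" and "pathfinish q = pathfinish g"
    and "path_image g \<inter> path_image q \<subseteq> {pathstart g, pathfinish g}"
  shows "simple_path (g +++ reversepath q)"
  using assms by (intro simple_path_join_loop) (auto simp: arc_reversepath)

lemma connected_component_Un_chord_arc:
  fixes K :: "complex set" and g q :: "real \<Rightarrow> complex"
  defines "J \<equiv> path_image (g +++ reversepath q)"
  assumes "closed K" and "arc g" and "arc q" and "path_image q \<subseteq> K"
    and "pathstart q = pathstart g" and "pathfinish q = pathfinish g"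
    and "path_image g \<inter> K \<subseteq> {pathstart g, pathfinish g}"
    and "x \<notin> K \<union> path_image g" and "y \<notin> K \<union> path_image g"
    and "connected_component (- K) x y" and "x \<in> inside J \<longleftrightarrow> y \<in> inside J"
  shows "connected_component (- (K \<union> path_image g)) x y"
proof -
  have J: "J = path_image g \<union> path_image q"
    unfolding J_def using assms(7) by (simp add: path_image_join)
  have "simple_path (g +++ reversepath q)"
    using assms(3-8) by (intro simple_loop_join_arcs) auto
  then have "connected (inside J)" "connected (outside J)"
    unfolding J_def using Jordan_inside_outside[of "g +++ reversepath q"] assms(6) by auto
  have "x \<notin> J" "y \<notin> J" using assms(5,9,10) J by auto
  have "connected_component (- J) x y"
  proof (cases "x \<in> inside J")
    case True
    then show ?thesis
      using assms(12) \<open>connected (inside J)\<close> inside_no_overlap[of J]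
      unfolding connected_component_def by (intro exI[of _ "inside J"]) blast
  next
    case False
    then have "x \<in> outside J" "y \<in> outside J"
      using assms(12) \<open>x \<notin> J\<close> \<open>y \<notin> J\<close> inside_Un_outside[of J] by blast+
    then show ?thesis
      using \<open>connected (outside J)\<close> outside_no_overlap[of J]
      unfolding connected_component_def by (intro exI[of _ "outside J"]) blast
  qed
  moreover have "J \<inter> K = path_image q"
    using J assms(5-8) pathstart_in_path_image[of q] pathfinish_in_path_image[of q] by auto
  then have "connected (J \<inter> K)"
    using \<open>arc q\<close> arc_imp_path connected_path_image by auto
  moreover have "compact J"
    unfolding J_def using \<open>simple_path (g +++ reversepath q)\<close>
    by (simp add: compact_simple_path_image)
  ultimately have "connected_component (- (J \<union> K)) x y"
    using Janiszewski[OF _ assms(2) _ _ assms(11)] by blast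
  moreover have "J \<union> K = K \<union> path_image g" using J assms(5) by auto
  ultimately show ?thesis by simp
qed

lemma chord_arc_separates:
  fixes K :: "complex set" and g q :: "real \<Rightarrow> complex"
  assumes "closed K" and "arc g" and "arc q" and "path_image q \<subseteq> K"
    and "pathstart q = pathstart g" and "pathfinish q = pathfinish g"
    and "path_image g \<inter> K \<subseteq> {pathstart g, pathfinish g}"
  obtains x y where "x \<notin> K \<union> path_image g" and "y \<notin> K \<union> path_image g"
    and "connected_component (- K) x y" and "\<not> connected_component (- (K \<union> path_image g)) x y"
proof -
  let ?J = "path_image (g +++ reversepath q)" and ?p = "g (1/2)"
  \<comment> \<open>The witnesses are points near ?p on the two sides of the Jordan curve ?J.\<close>
  have J: "?J = path_image g \<union> path_image q"
    using assms(6) by (simp add: path_image_join)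
  have "simple_path (g +++ reversepath q)"
    using assms(2-7) by (intro simple_loop_join_arcs) auto
  then have fr: "frontier (inside ?J) = ?J" "frontier (outside ?J) = ?J"
    using Jordan_inside_outside[of "g +++ reversepath q"] assms(5) by auto
  have "?p \<noteq> g 0" "?p \<noteq> g 1"
    using \<open>arc g\<close> by (auto simp: arc_def dest: inj_onD)
  moreover have "?p \<in> path_image g" by (simp add: path_image_def)
  ultimately have "?p \<notin> K" using assms(7) by (auto simp: pathstart_def pathfinish_def)
  then obtain r where "r > 0" and r: "ball ?p r \<subseteq> - K"
    using \<open>closed K\<close> open_contains_ball[of "- K"] by auto
  have "?p \<in> closure (inside ?J)" "?p \<in> closure (outside ?J)"
    using fr J \<open>?p \<in> path_image g\<close> by (auto simp: frontier_def)
  then obtain x y where x: "x \<in> inside ?J" "x \<in> ball ?p r" and y: "y \<in> outside ?J" "y \<in> ball ?p r"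
    using \<open>r > 0\<close> by (metis closure_approachable dist_commute mem_ball)
  show ?thesis
  proof
    show "x \<notin> K \<union> path_image g" "y \<notin> K \<union> path_image g"
      using x y r J inside_no_overlap[of ?J] outside_no_overlap[of ?J] by blast+
    show "connected_component (- K) x y"
      unfolding connected_component_def using x(2) y(2) r by (intro exI[of _ "ball ?p r"]) auto
    show "\<not> connected_component (- (K \<union> path_image g)) x y"
    proof
      assume "connected_component (- (K \<union> path_image g)) x y"
      then have "connected_component (- ?J) x y"
        by (rule connected_component_of_subset) (use J assms(4) in auto)
      then have "connected_component_set (- ?J) y = connected_component_set (- ?J) x"
        by (intro connected_component_eq) simp
      then show False
        using x(1) y(1) unfolding inside_def outside_def by auto
    qed
  qed
qed

lemma components_Un_chord_arc:
  fixes K :: "complex set" and g :: "real \<Rightarrow> complex"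
  assumes "closed K" and "finite (components (- K))" and "arc g"
    and "path_component K (pathstart g) (pathfinish g)"
    and "path_image g \<inter> K \<subseteq> {pathstart g, pathfinish g}"
  shows "finite (components (- (K \<union> path_image g)))"
    and "card (components (- K)) < card (components (- (K \<union> path_image g)))"
proof -
  obtain p where p: "path p" "path_image p \<subseteq> K" "pathstart p = pathstart g" "pathfinish p = pathfinish g"
    using assms(4) unfolding path_component_def by blast
  moreover have "pathstart g \<noteq> pathfinish g" using arc_distinct_ends[OF \<open>arc g\<close>] by simp
  ultimately obtain q where q: "arc q" "path_image q \<subseteq> K"
    "pathstart q = pathstart g" "pathfinish q = pathfinish g"
    by (metis path_contains_arc order_trans)
  have "interior (path_image g) = {}"
    using \<open>arc g\<close> by (simp add: interior_arc_image_empty)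
  then show fin: "finite (components (- (K \<union> path_image g)))"
    using components_Un_interior_empty(1)[where Q = "\<lambda>x. x \<in> inside (path_image (g +++ reversepath q))",
        OF assms(1) _ assms(2)] connected_component_Un_chord_arc[OF assms(1,3) q assms(5)]
    by blast
  obtain x y where "x \<notin> K \<union> path_image g" "y \<notin> K \<union> path_image g"
    "connected_component (- K) x y" "\<not> connected_component (- (K \<union> path_image g)) x y"
    using chord_arc_separates[OF assms(1,3) q assms(5)] .
  with assms(1) \<open>interior (path_image g) = {}\<close> fin
  show "card (components (- K)) < card (components (- (K \<union> path_image g)))"
    by (rule card_components_less_Un)
qed

lemma compact_path_component_Union:
  fixes \<P> :: "'a::real_normed_vector set set"
  assumes "finite \<P>" and "\<And>X. X \<in> \<P> \<Longrightarrow> compact X \<and> path_connected X"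
  shows "compact (path_component_set (\<Union>\<P>) a)" and "compact (\<Union>\<P> - path_component_set (\<Union>\<P>) a)"
proof -
  let ?C = "path_component_set (\<Union>\<P>) a"
  have inside_or_disjoint: "X \<subseteq> ?C \<or> X \<inter> ?C = {}" if "X \<in> \<P>" for X
  proof (rule disjCI)
    assume "X \<inter> ?C \<noteq> {}"
    then obtain z where z: "z \<in> X" "z \<in> ?C" by auto
    have "X \<subseteq> path_component_set (\<Union>\<P>) z"
      using z(1) that assms(2)[OF that] by (intro path_component_maximal) auto
    also have "\<dots> = ?C" using z(2) by (rule path_component_eq)
    finally show "X \<subseteq> ?C" .
  qed
  have "?C = \<Union>{X\<in>\<P>. X \<inter> ?C \<noteq> {}}" "\<Union>\<P> - ?C = \<Union>{X\<in>\<P>. X \<inter> ?C = {}}"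
    using inside_or_disjoint path_component_subset[of "\<Union>\<P>" a] by blast+
  moreover have "compact (\<Union>{X\<in>\<P>. X \<inter> ?C \<noteq> {}})" "compact (\<Union>{X\<in>\<P>. X \<inter> ?C = {}})"
    using assms by auto
  ultimately show "compact ?C" "compact (\<Union>\<P> - ?C)" by simp_all
qed

lemma components_Un_bridge_arc:
  fixes \<P> :: "complex set set" and g :: "real \<Rightarrow> complex"
  assumes "finite \<P>" and "\<And>X. X \<in> \<P> \<Longrightarrow> compact X \<and> path_connected X"
    and "finite (components (- \<Union>\<P>))" and "arc g" and "pathstart g \<in> \<Union>\<P>"
    and "\<not> path_component (\<Union>\<P>) (pathstart g) (pathfinish g)"
    and "path_image g \<inter> \<Union>\<P> \<subseteq> {pathstart g, pathfinish g}"
  shows "finite (components (- (\<Union>\<P> \<union> path_image g)))"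
    and "card (components (- \<Union>\<P>)) \<le> card (components (- (\<Union>\<P> \<union> path_image g)))"
proof -
  let ?K = "\<Union>\<P>"
  define K1 where "K1 = path_component_set ?K (pathstart g)"
  define K2 where "K2 = ?K - K1"
  have "compact K1" "compact K2"
    unfolding K1_def K2_def using compact_path_component_Union[OF assms(1,2)] by blast+
  have K: "?K = K1 \<union> K2" unfolding K2_def K1_def using path_component_subset by blast
  have "pathfinish g \<notin> K1" "pathstart g \<notin> K2"
    using assms(6) path_component_refl[OF assms(5)] by (auto simp: K1_def K2_def)
  have "closed ?K" using assms(1,2) by (auto intro: compact_imp_closed)
  moreover have "interior (path_image g) = {}"
    using \<open>arc g\<close> by (simp add: interior_arc_image_empty)
  moreover have "connected_component (- (?K \<union> path_image g)) x y"
    if "x \<notin> ?K \<union> path_image g" "y \<notin> ?K \<union> path_image g" "connected_component (- ?K) x y" for x y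
    using connected_component_Un_bridge_arc[OF \<open>compact K1\<close> compact_imp_closed[OF \<open>compact K2\<close>] _ \<open>arc g\<close>]
      that assms(7) \<open>pathfinish g \<notin> K1\<close> \<open>pathstart g \<notin> K2\<close> unfolding K by (auto simp: K2_def)
  ultimately show "finite (components (- (?K \<union> path_image g)))"
    and "card (components (- ?K)) \<le> card (components (- (?K \<union> path_image g)))"
    using components_Un_interior_empty[where Q = "\<lambda>_. True", OF _ _ assms(3)] by blast+
qed

lemma path_component_set_eq_mono:
  assumes "T \<subseteq> S" and "y \<in> T"
    and "path_component_set T x = path_component_set T y"
  shows "path_component_set S x = path_component_set S y"
proof -
  have "y \<in> path_component_set T x" using assms(2,3) by (simp add: path_component_refl)
  then have "path_component S x y"
    using assms(1) by (simp add: path_component_of_subset)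
  then show ?thesis by (simp add: path_component_eq)
qed

lemma card_path_component_image_mono:
  assumes "finite P" and "P \<subseteq> K" and "K \<subseteq> K'"
  shows "card (path_component_set K' ` P) \<le> card (path_component_set K ` P)"
proof (rule card_image_le_if_factors)
  show "finite (path_component_set K ` P)" using assms(1) by simp
  fix u w assume "u \<in> P" "w \<in> P" "path_component_set K u = path_component_set K w"
  then show "path_component_set K' u = path_component_set K' w"
    using path_component_set_eq_mono[of K K' w u] assms(2,3) by auto
qed

lemma card_path_component_image_less:
  assumes "finite P" and "P \<subseteq> K" and "K \<subseteq> K'" and "u \<in> P" "w \<in> P"
    and "\<not> path_component K u w" and "path_component K' u w"
  shows "card (path_component_set K' ` P) < card (path_component_set K ` P)"
proof (rule card_image_less_if_factors[where u = u and w = w])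
  show "path_component_set K u \<noteq> path_component_set K w"
    using assms(2,5,6) path_component_refl[of w K] by auto
  show "path_component_set K' u = path_component_set K' w"
    using assms(7) by (simp add: path_component_eq)
  show "finite (path_component_set K ` P)" using assms(1) by simp
  fix u w assume "u \<in> P" "w \<in> P" "path_component_set K u = path_component_set K w"
  then show "path_component_set K' u = path_component_set K' w"
    using path_component_set_eq_mono[of K K' w u] assms(2,3) by auto
qed (use assms in auto)

lemma euler_step:
  fixes \<P> :: "complex set set" and P :: "complex set" and g :: "real \<Rightarrow> complex"
  defines "K \<equiv> \<Union>\<P>"
  assumes "finite \<P>" and "\<And>X. X \<in> \<P> \<Longrightarrow> compact X \<and> path_connected X"
    and "finite P" and "P \<subseteq> K" and "finite (components (- K))"
    and "arc g" and "pathstart g \<in> P" and "pathfinish g \<in> P"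
    and "path_image g \<inter> K \<subseteq> {pathstart g, pathfinish g}"
  shows "finite (components (- (K \<union> path_image g)))"
    and "card (path_component_set (K \<union> path_image g) ` P) + card (components (- K))
      < card (path_component_set K ` P) + card (components (- (K \<union> path_image g)))"
proof -
  have mono: "card (path_component_set (K \<union> path_image g) ` P) \<le> card (path_component_set K ` P)"
    using assms(4,5) by (intro card_path_component_image_mono) auto
  have "finite (components (- (K \<union> path_image g))) \<and>
      card (path_component_set (K \<union> path_image g) ` P) + card (components (- K))
      < card (path_component_set K ` P) + card (components (- (K \<union> path_image g)))"
  proof (cases "path_component K (pathstart g) (pathfinish g)")
    case True
    have "closed K" unfolding K_def using assms(2,3) by (auto intro: compact_imp_closed)
    note chord = components_Un_chord_arc[OF \<open>closed K\<close> assms(6,7) True assms(10)]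
    show ?thesis using chord mono by simp
  next
    case False
    have "path_component (K \<union> path_image g) (pathstart g) (pathfinish g)"
      unfolding path_component_def using \<open>arc g\<close> arc_imp_path by (intro exI[of _ g]) auto
    then have "card (path_component_set (K \<union> path_image g) ` P) < card (path_component_set K ` P)"
      using assms(4,5,8,9) False by (intro card_path_component_image_less) auto
    moreover have "pathstart g \<in> K" using assms(5,8) by auto
    note bridge = components_Un_bridge_arc[OF assms(2,3) assms(6,7)[unfolded K_def] this[unfolded K_def]
        False[unfolded K_def] assms(10)[unfolded K_def]]
    ultimately show ?thesis using bridge unfolding K_def by simp
  qed
  then show "finite (components (- (K \<union> path_image g)))"
    and "card (path_component_set (K \<union> path_image g) ` P) + card (components (- K))
      < card (path_component_set K ` P) + card (components (- (K \<union> path_image g)))"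
    by blast+
qed

lemma components_Compl_finite:
  fixes F :: "complex set"
  assumes "finite F"
  shows "components (- F) = {- F}"
proof -
  have "connected (- F)"
    using assms by (intro path_connected_imp_connected path_connected_complement_countable)
      (simp_all add: countable_finite)
  moreover have "- F \<noteq> {}"
  proof
    assume "- F = {}"
    then have "F = UNIV" by blast
    with assms infinite_UNIV_char_0[where 'a = complex] show False by simp
  qed
  ultimately show ?thesis by (simp add: components_eq_sing_iff)
qed

lemma path_component_set_finite:
  fixes F :: "'a::real_normed_vector set"
  assumes "finite F" and "x \<in> F"
  shows "path_component_set F x = {x}"
proof -
  have "finite (path_component_set F x)"
    using assms(1) path_component_subset by (rule finite_subset[rotated])
  moreover have "connected (path_component_set F x)"
    by (simp add: path_connected_imp_connected path_connected_path_component)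
  ultimately have "path_component_set F x = {} \<or> (\<exists>a. path_component_set F x = {a})"
    using connected_finite_iff_sing by blast
  moreover have "x \<in> path_component_set F x"
    using assms(2) by (simp add: path_component_refl)
  ultimately show ?thesis by (metis empty_iff singletonD)
qed

lemma simple_graph_edgeE:
  assumes "simple_graph V E" and "e \<in> E"
  obtains u w where "u \<noteq> w" and "e = {u, w}" and "u \<in> V" and "w \<in> V"
  using assms unfolding simple_graph_def by auto

lemma simple_graph_edges_subset: "simple_graph V E \<Longrightarrow> E \<subseteq> Pow V"
  by (auto elim: simple_graph_edgeE)

lemma simple_graph_finite_edges:
  assumes "simple_graph V E"
  shows "finite E"
proof (rule finite_subset)
  show "E \<subseteq> Pow V" using assms by (rule simple_graph_edges_subset)
  show "finite (Pow V)" using assms by (simp add: simple_graph_def)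
qed

lemma simple_graph_subset: "simple_graph V E \<Longrightarrow> F \<subseteq> E \<Longrightarrow> simple_graph V F"
  unfolding simple_graph_def by blast

lemma plane_embedding_subset:
  assumes "plane_embedding V E pos \<gamma>" and "F \<subseteq> E"
  shows "plane_embedding V F pos \<gamma>"
  using assms unfolding plane_embedding_def by (smt (verit) subsetD)

lemma embedding_set_insert:
  "embedding_set V (insert e F) pos \<gamma> = embedding_set V F pos \<gamma> \<union> path_image (\<gamma> e)"
  unfolding embedding_set_def by auto

lemma embedding_set_eq_Union:
  "embedding_set V E pos \<gamma> = \<Union>((\<lambda>v. {pos v}) ` V \<union> (\<lambda>e. path_image (\<gamma> e)) ` E)"
  unfolding embedding_set_def by (simp add: Union_Un_distrib UNION_singleton_eq_range)

lemma compact_path_connected_embedding_pieces: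
  assumes "plane_embedding V E pos \<gamma>"
    and "X \<in> (\<lambda>v. {pos v}) ` V \<union> (\<lambda>e. path_image (\<gamma> e)) ` E"
  shows "compact X \<and> path_connected X"
  using assms(2)
proof
  assume "X \<in> (\<lambda>v. {pos v}) ` V"
  then show ?thesis by auto
next
  assume "X \<in> (\<lambda>e. path_image (\<gamma> e)) ` E"
  then obtain e where "e \<in> E" "X = path_image (\<gamma> e)" by blast
  moreover have "arc (\<gamma> e)" using assms(1) \<open>e \<in> E\<close> by (simp add: plane_embedding_def)
  ultimately show ?thesis
    by (simp add: arc_imp_path compact_path_image path_connected_path_image)
qed

lemma edge_arc_meets_embedding_set:
  assumes "plane_embedding V (insert e F) pos \<gamma>" and "e \<notin> F"
  shows "path_image (\<gamma> e) \<inter> embedding_set V F pos \<gamma> \<subseteq> {pathstart (\<gamma> e), pathfinish (\<gamma> e)}"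
proof -
  have "path_image (\<gamma> e) \<inter> path_image (\<gamma> e') \<subseteq> pos ` e" if "e' \<in> F" for e'
    using assms that unfolding plane_embedding_def by (metis (no_types, lifting) Int_lower1 image_mono insertCI order_trans)
  moreover have "path_image (\<gamma> e) \<inter> pos ` V \<subseteq> pos ` e"
    and "pos ` e = {pathstart (\<gamma> e), pathfinish (\<gamma> e)}"
    using assms(1) unfolding plane_embedding_def by auto
  ultimately show ?thesis unfolding embedding_set_def by blast
qed

(* The path components of the drawing through the vertices are the connected
   components of the graph. *)
lemma euler_inequality:
  assumes "simple_graph V E" and "plane_embedding V E pos \<gamma>"
  shows "finite (components (- embedding_set V E pos \<gamma>)) \<and>
    card (path_component_set (embedding_set V E pos \<gamma>) ` pos ` V) + card E + 1
      \<le> card (components (- embedding_set V E pos \<gamma>)) + card V"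
  using simple_graph_finite_edges[OF assms(1)] assms
proof (induction E rule: finite_induct)
  case empty
  have "finite V" using empty.prems(1) by (simp add: simple_graph_def)
  have "inj_on pos V" using empty.prems(2) by (simp add: plane_embedding_def)
  have K: "embedding_set V {} pos \<gamma> = pos ` V" by (simp add: embedding_set_def)
  have "path_component_set (pos ` V) p = {p}" if "p \<in> pos ` V" for p
    using \<open>finite V\<close> that by (simp add: path_component_set_finite)
  then have "path_component_set (pos ` V) ` pos ` V = (\<lambda>p. {p}) ` pos ` V"
    by (rule image_cong[OF refl])
  then have "card (path_component_set (pos ` V) ` pos ` V) = card V"
    using \<open>inj_on pos V\<close> by (simp add: card_image)
  then show ?case
    unfolding K using components_Compl_finite[of "pos ` V"] \<open>finite V\<close> by simp
next
  case (insert e F)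
  let ?K = "embedding_set V F pos \<gamma>" and ?\<P> = "(\<lambda>v. {pos v}) ` V \<union> (\<lambda>e. path_image (\<gamma> e)) ` F"
  have "simple_graph V F" "plane_embedding V F pos \<gamma>"
    using simple_graph_subset[OF insert.prems(1)] plane_embedding_subset[OF insert.prems(2)] by auto
  with insert.IH have IH: "finite (components (- ?K))"
    "card (path_component_set ?K ` pos ` V) + card F + 1 \<le> card (components (- ?K)) + card V"
    by blast+
  have "finite V" using insert.prems(1) by (simp add: simple_graph_def)
  have "arc (\<gamma> e)" and "{pathstart (\<gamma> e), pathfinish (\<gamma> e)} = pos ` e"
    using insert.prems(2) by (simp_all add: plane_embedding_def)
  moreover have "pos ` e \<subseteq> pos ` V" using insert.prems(1) by (auto elim: simple_graph_edgeE)
  ultimately have ends: "pathstart (\<gamma> e) \<in> pos ` V" "pathfinish (\<gamma> e) \<in> pos ` V"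
    by auto
  note step = euler_step[of ?\<P> "pos ` V" "\<gamma> e", folded embedding_set_eq_Union,
      OF _ compact_path_connected_embedding_pieces[OF \<open>plane_embedding V F pos \<gamma>\<close>]
      _ _ IH(1) \<open>arc (\<gamma> e)\<close> ends edge_arc_meets_embedding_set[OF insert.prems(2) insert.hyps(2)]]
  have "finite ?\<P>" "pos ` V \<subseteq> ?K" using \<open>finite V\<close> insert.hyps(1) by (auto simp: embedding_set_def)
  with step IH(2) \<open>finite V\<close> insert.hyps show ?case
    unfolding embedding_set_insert by simp
qed

lemma sum_degree_eq_twice_card_edges:
  assumes "simple_graph V E"
  shows "(\<Sum>v\<in>V. degree E v) = 2 * card E"
proof -
  have "finite V" using assms by (simp add: simple_graph_def)
  have "finite E" using assms by (rule simple_graph_finite_edges)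
  have edge_card: "card {v\<in>V. v \<in> e} = 2" if "e \<in> E" for e
  proof -
    obtain u w where "u \<noteq> w" "e = {u, w}" "u \<in> V" "w \<in> V"
      using assms \<open>e \<in> E\<close> by (rule simple_graph_edgeE)
    then have "{v\<in>V. v \<in> e} = {u, w}" by auto
    with \<open>u \<noteq> w\<close> show ?thesis by simp
  qed
  have "(\<Sum>v\<in>V. degree E v) = (\<Sum>v\<in>V. \<Sum>e\<in>E. if v \<in> e then 1 else 0)"
    unfolding degree_def using \<open>finite E\<close> by (simp add: sum.inter_filter[symmetric])
  also have "\<dots> = (\<Sum>e\<in>E. \<Sum>v\<in>V. if v \<in> e then 1 else 0)"
    by (rule sum.swap)
  also have "\<dots> = (\<Sum>e\<in>E. card {v\<in>V. v \<in> e})"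
    using \<open>finite V\<close> by (simp add: sum.inter_filter[symmetric])
  also have "\<dots> = 2 * card E"
    using edge_card by simp
  finally show ?thesis .
qed

lemma degree_ge_two_if_matched:
  assumes "simple_graph V E" and "perfect_matching V E M" and "v \<in> V" and "degree E v \<noteq> 1"
  shows "2 \<le> degree E v"
proof -
  have "M \<subseteq> E" using assms(2) by (simp add: perfect_matching_def)
  have "\<exists>!m. m \<in> M \<and> v \<in> m" using assms(2,3) by (simp add: perfect_matching_def)
  then obtain m where "m \<in> M" "v \<in> m" by auto
  then have "m \<in> {e\<in>E. v \<in> e}" using \<open>M \<subseteq> E\<close> by auto
  moreover have "finite {e\<in>E. v \<in> e}" using simple_graph_finite_edges[OF assms(1)] by simp
  ultimately have "degree E v \<noteq> 0" unfolding degree_def by (metis card_0_eq empty_iff)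
  with assms(4) show ?thesis by simp
qed

lemma perfect_matching_mate:
  assumes "simple_graph V E" and "perfect_matching V E M"
  obtains \<mu> where "\<And>v. v \<in> V \<Longrightarrow> \<mu> v \<in> V \<and> \<mu> v \<noteq> v \<and> {v, \<mu> v} \<in> M"
proof -
  have "\<exists>w. w \<in> V \<and> w \<noteq> v \<and> {v, w} \<in> M" if "v \<in> V" for v
  proof -
    have "\<exists>!m. m \<in> M \<and> v \<in> m" using assms(2) that by (simp add: perfect_matching_def)
    then obtain m where "m \<in> M" "v \<in> m" by auto
    then have "m \<in> E" using assms(2) by (auto simp: perfect_matching_def)
    then obtain u w where "u \<noteq> w" "m = {u, w}" "u \<in> V" "w \<in> V"
      by (rule simple_graph_edgeE[OF assms(1)])
    with \<open>m \<in> M\<close> \<open>v \<in> m\<close> show ?thesis by (auto simp: insert_commute)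
  qed
  then have "\<forall>v\<in>V. \<exists>w. w \<in> V \<and> w \<noteq> v \<and> {v, w} \<in> M" by blast
  then obtain \<mu> where "\<forall>v\<in>V. \<mu> v \<in> V \<and> \<mu> v \<noteq> v \<and> {v, \<mu> v} \<in> M"
    by (rule bchoice[THEN exE])
  then show ?thesis using that by blast
qed

lemma card_degree_two_le:
  assumes "simple_graph V E" and "perfect_matching V E M"
    and "\<forall>u\<in>V. \<forall>v\<in>V. adjacent E u v \<longrightarrow> \<not> (degree E u = 2 \<and> degree E v = 2)"
  shows "card {v\<in>V. degree E v = 2} \<le> card {v\<in>V. degree E v \<noteq> 2}"
proof -
  let ?S = "{v\<in>V. degree E v = 2}"
  obtain \<mu> where \<mu>: "\<And>v. v \<in> V \<Longrightarrow> \<mu> v \<in> V \<and> \<mu> v \<noteq> v \<and> {v, \<mu> v} \<in> M"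
    using perfect_matching_mate[OF assms(1,2)] by blast
  have "M \<subseteq> E" using assms(2) by (simp add: perfect_matching_def)
  have "inj_on \<mu> ?S"
  proof (rule inj_onI)
    fix v v' assume "v \<in> ?S" "v' \<in> ?S" "\<mu> v = \<mu> v'"
    then have "\<mu> v \<in> V" "{v, \<mu> v} \<in> M" "{v', \<mu> v} \<in> M" "v \<noteq> \<mu> v"
      using \<mu>[of v] \<mu>[of v'] by auto
    moreover have "\<exists>!m. m \<in> M \<and> \<mu> v \<in> m" using assms(2) \<open>\<mu> v \<in> V\<close> by (simp add: perfect_matching_def)
    ultimately have "{v, \<mu> v} = {v', \<mu> v}" by blast
    with \<open>v \<noteq> \<mu> v\<close> show "v = v'" by (metis doubleton_eq_iff)
  qed
  moreover have "\<mu> ` ?S \<subseteq> {v\<in>V. degree E v \<noteq> 2}"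
  proof
    fix w assume "w \<in> \<mu> ` ?S"
    then obtain v where "v \<in> ?S" "w = \<mu> v" by blast
    then have "w \<in> V" "adjacent E v w"
      using \<mu> \<open>M \<subseteq> E\<close> unfolding adjacent_def by auto
    then show "w \<in> {v\<in>V. degree E v \<noteq> 2}" using assms(3) \<open>v \<in> ?S\<close> by auto
  qed
  moreover have "finite V" using assms(1) by (simp add: simple_graph_def)
  ultimately show ?thesis by (intro card_inj_on_le) auto
qed

lemma five_card_vertices_le_four_card_edges:
  assumes "simple_graph V E" and "perfect_matching V E M" and "\<forall>v\<in>V. degree E v \<noteq> 1"
    and "\<forall>u\<in>V. \<forall>v\<in>V. adjacent E u v \<longrightarrow> \<not> (degree E u = 2 \<and> degree E v = 2)"
  shows "5 * card V \<le> 4 * card E"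
proof -
  let ?S = "{v\<in>V. degree E v = 2}" and ?T = "{v\<in>V. degree E v \<noteq> 2}"
  have "finite V" using assms(1) by (simp add: simple_graph_def)
  then have fin: "finite ?S" "finite ?T" by simp_all
  have split: "V = ?S \<union> ?T" "?S \<inter> ?T = {}" by auto
  have "2 * card E = (\<Sum>v\<in>V. degree E v)"
    using assms(1) by (simp add: sum_degree_eq_twice_card_edges)
  also have "\<dots> = (\<Sum>v\<in>?S. degree E v) + (\<Sum>v\<in>?T. degree E v)"
    by (subst split(1)) (rule sum.union_disjoint[OF fin split(2)])
  also have "(\<Sum>v\<in>?S. degree E v) = 2 * card ?S" by simp
  also have "3 * card ?T \<le> (\<Sum>v\<in>?T. degree E v)"
    using sum_mono[of ?T "\<lambda>_. 3" "degree E"] degree_ge_two_if_matched[OF assms(1,2)] assms(3)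
    by fastforce
  moreover have "card V = card ?S + card ?T"
    by (subst split(1)) (rule card_Un_disjoint[OF fin split(2)])
  moreover have "card ?S \<le> card ?T"
    using assms(1,2,4) by (rule card_degree_two_le)
  ultimately show ?thesis by linarith
qed

lemma inj_on_closure_components:
  fixes U :: "'a::real_normed_vector set"
  assumes "open U"
  shows "inj_on closure (components U)"
proof (rule inj_onI)
  fix C D assume C: "C \<in> components U" and D: "D \<in> components U" and eq: "closure C = closure D"
  show "C = D"
  proof (rule ccontr)
    assume "C \<noteq> D"
    then have "C \<inter> D = {}" using components_nonoverlap[OF C D] by simp
    then have "C \<inter> closure D = {}"
      using open_Int_closure_eq_empty open_components[OF assms C] by blast
    moreover have "C \<subseteq> closure D" using eq closure_subset[of C] by simp
    ultimately show False using in_components_nonempty[OF C] by blast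
  qed
qed

lemma card_faces_eq_card_components:
  assumes "simple_graph V E" and "plane_embedding V E pos \<gamma>"
  shows "card (faces V E pos \<gamma>) = card (components (- embedding_set V E pos \<gamma>))"
proof -
  have "finite ((\<lambda>v. {pos v}) ` V \<union> (\<lambda>e. path_image (\<gamma> e)) ` E)"
    using assms(1) simple_graph_finite_edges[OF assms(1)] by (simp add: simple_graph_def)
  then have "compact (embedding_set V E pos \<gamma>)"
    unfolding embedding_set_eq_Union
    using compact_path_connected_embedding_pieces[OF assms(2)] by (intro compact_Union) auto
  then have "open (- embedding_set V E pos \<gamma>)" by (simp add: compact_imp_closed open_Compl)
  then show ?thesis
    unfolding faces_def by (intro card_image inj_on_closure_components)
qed

theorem lemma7:
  fixes V :: "'a set" and E :: "'a set set"
    and pos :: "'a \<Rightarrow> complex" and \<gamma> :: "'a set \<Rightarrow> real \<Rightarrow> complex"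
  assumes "simple_graph V E"
    and "V \<noteq> {}"
    and "plane_embedding V E pos \<gamma>"
    and "\<exists>M. perfect_matching V E M"
    and "\<forall>v\<in>V. degree E v \<noteq> 1"
    and "\<forall>u\<in>V. \<forall>v\<in>V. adjacent E u v \<longrightarrow> \<not> (degree E u = 2 \<and> degree E v = 2)"
  shows "real (card (faces V E pos \<gamma>)) \<ge> real (card V) / 4 + 2"
proof -
  let ?K = "embedding_set V E pos \<gamma>"
  obtain M where "perfect_matching V E M" using assms(4) by blast
  then have "5 * card V \<le> 4 * card E"
    using five_card_vertices_le_four_card_edges[OF assms(1) _ assms(5,6)] by blast
  moreover have "card (path_component_set ?K ` pos ` V) + card E + 1 \<le> card (components (- ?K)) + card V"
    using euler_inequality[OF assms(1,3)] by blast
  moreover have "card (path_component_set ?K ` pos ` V) \<ge> 1"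
    using assms(1,2) by (simp add: simple_graph_def Suc_le_eq card_gt_0_iff)
  moreover have "card (faces V E pos \<gamma>) = card (components (- ?K))"
    using assms(1,3) by (rule card_faces_eq_card_components)
  ultimately have "card V + 8 \<le> 4 * card (faces V E pos \<gamma>)" by linarith
  then show ?thesis by linarith
qed

end
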